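(* Let $n,d\ge1$. Let $W=(w_{i,j})$, $\widetilde W=(\tilde w_{i,j})$ be real $n\times n$ matrices and $G,\widetilde G$ real $nd\times nd$ block matrices with $d\times d$ blocks $G_{i,j},\widetilde G_{i,j}$. Suppose there exist $f_1,\dots,f_n>0$ and $\varepsilon,\eta\ge0$ with $$\sup_{i,j}\Big|\frac{\tilde w_{i,j}}{f_i}-w_{i,j}\Big|\le\varepsilon,\qquad \sup_{i,j}\|\widetilde G_{i,j}-G_{i,j}\|_F\le\eta,$$ and that there is $C>0$ with $0\le w_{i,j}\le C$ for all $i,j$, $\sup_{i,j}\|G_{i,j}\|_F\le C$ and $\sup_{i,j}\|\widetilde G_{i,j}\|_F\le C$. If $\inf_i\frac1n\sum_{j\ne i}w_{i,j}>\gamma$ and $\gamma>\varepsilon$, then $$\|L(W,G)-L(\widetilde W,\widetilde G)\|_{op}\le \frac1\gamma C(\eta+\varepsilon)+\frac{\varepsilon}{\gamma(\gamma-\varepsilon)}C^2.$$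
   Context: For an $n\times n$ matrix $W=(w_{i,j})$ and an $nd\times nd$ block matrix $G$ with $d\times d$ blocks $G_{i,j}$, define $S$ as the block matrix with blocks $S_{i,j}=w_{i,j}G_{i,j}$ and $D$ as the block-diagonal matrix with diagonal blocks $D_{i,i}=\big(\sum_{j\ne i}w_{i,j}\big)\mathrm I_d$ (assumed invertible); $L(W,G):=D^{-1}S$. $\|\cdot\|_{op}$ is the largest singular value, $\|\cdot\|_F$ the Frobenius norm. *)

theory Defs
  imports "HOL-Analysis.Analysis"
begin

text \<open>An n x n real matrix is a function nat => nat => real, only the
entries with indices below n are relevant (indices start at 0).
An nd x nd block matrix G is a function nat => nat => real on indices below n*d;
its (i,j) block (i,j < n) is the d x d matrix with entries G (i*d+a) (j*d+b), a,b < d.\<close>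

definition blk :: "nat \<Rightarrow> (nat \<Rightarrow> nat \<Rightarrow> real) \<Rightarrow> nat \<Rightarrow> nat \<Rightarrow> nat \<Rightarrow> nat \<Rightarrow> real" where
  "blk d G i j a b = G (i*d+a) (j*d+b)"

definition frob :: "nat \<Rightarrow> (nat \<Rightarrow> nat \<Rightarrow> real) \<Rightarrow> real" where
  "frob d M = sqrt (\<Sum>a<d. \<Sum>b<d. (M a b)\<^sup>2)"

definition opnorm :: "nat \<Rightarrow> (nat \<Rightarrow> nat \<Rightarrow> real) \<Rightarrow> real" where
  "opnorm N M = Sup {sqrt (\<Sum>p<N. (\<Sum>q<N. M p q * x q)\<^sup>2) | x :: nat \<Rightarrow> real.
                     (\<Sum>q<N. (x q)\<^sup>2) \<le> 1}"

definition deg :: "nat \<Rightarrow> (nat \<Rightarrow> nat \<Rightarrow> real) \<Rightarrow> nat \<Rightarrow> real" where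
  "deg n W i = (\<Sum>j\<in>{..<n} - {i}. W i j)"

text \<open>L(W,G) = D^{-1} S, where S has blocks w_{i,j} G_{i,j} and D is block diagonal
with blocks D_i I_d. Entry (p,q) of the nd x nd matrix, with p = i*d+a, q = j*d+b.\<close>
definition Lmat :: "nat \<Rightarrow> nat \<Rightarrow> (nat \<Rightarrow> nat \<Rightarrow> real) \<Rightarrow> (nat \<Rightarrow> nat \<Rightarrow> real) \<Rightarrow> nat \<Rightarrow> nat \<Rightarrow> real" where
  "Lmat n d W G p q = inverse (deg n W (p div d)) * (W (p div d) (q div d) * G p q)"

end

theory Submission
  imports Defs
begin

text \<open>The operator norm is bounded by the Frobenius norm. Dividing row \<open>i\<close> of \<open>W~\<close> by \<open>f i\<close>
does not change \<open>L\<close>, so with \<open>u = w~/f\<close>, \<open>D\<^sub>i = \<Sum>\<^sub>j\<^sub>\<noteq>\<^sub>i w\<^sub>i\<^sub>j\<close> and \<open>E\<^sub>i = \<Sum>\<^sub>j\<^sub>\<noteq>\<^sub>i u\<^sub>i\<^sub>j\<close> the difference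
splits blockwise into \<open>(w\<^sub>i\<^sub>j/D\<^sub>i)(G - G~)\<^sub>i\<^sub>j\<close> plus \<open>(w\<^sub>i\<^sub>j/D\<^sub>i - u\<^sub>i\<^sub>j/E\<^sub>i) G~\<^sub>i\<^sub>j\<close>.
Every \<open>w\<^sub>i\<^sub>j/D\<^sub>i\<close> is at most \<open>C/(n\<gamma>)\<close>, which gives \<open>C\<eta>/\<gamma>\<close> for the first part.
In row \<open>i\<close> of the second part, with \<open>\<delta> = u - w\<close> and \<open>\<Delta> = E - D\<close>, the weight difference is
\<open>(w\<^sub>j\<Delta> - \<delta>\<^sub>jD)/(D(D+\<Delta>))\<close>. Expanding the squared numerators, the only delicate term is the
correlation \<open>\<Delta> \<Sum> w\<^sub>j\<delta>\<^sub>j\<close>; it is bounded below by summing \<open>(C - w\<^sub>j)(\<epsilon> \<mp> \<delta>\<^sub>j) \<ge> 0\<close>, with the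
sign of \<open>\<Delta>\<close>. The numerators then sum to at most \<open>n\<^sup>3\<epsilon>\<^sup>2C\<^sup>2\<close>, which gives \<open>\<epsilon>C\<^sup>2/(\<gamma>(\<gamma>-\<epsilon>))\<close>
for the second part.\<close>

lemma frob_nonneg: "0 \<le> frob d M"
  by (simp add: frob_def sum_nonneg)

lemma frob_sq: "(frob d M)\<^sup>2 = (\<Sum>a<d. \<Sum>b<d. (M a b)\<^sup>2)"
  by (simp add: frob_def sum_nonneg)

lemma frob_eq_L2_set: "frob d M = L2_set (\<lambda>(a, b). M a b) ({..<d} \<times> {..<d})"
  by (simp add: frob_def L2_set_def sum.cartesian_product case_prod_unfold)

lemma frob_add_le: "frob d (\<lambda>a b. M a b + M' a b) \<le> frob d M + frob d M'"
  unfolding frob_eq_L2_set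
  using L2_set_triangle_ineq[of "\<lambda>(a, b). M a b" "\<lambda>(a, b). M' a b"]
  by (simp add: case_prod_unfold)

lemma opnorm_le_frob: "opnorm N M \<le> frob N M"
  unfolding opnorm_def
proof (rule cSup_least)
  show "{sqrt (\<Sum>p<N. (\<Sum>q<N. M p q * x q)\<^sup>2) | x. (\<Sum>q<N. (x q)\<^sup>2) \<le> 1} \<noteq> {}"
    by (auto intro!: exI[of _ "\<lambda>_. 0"])
next
  fix y assume "y \<in> {sqrt (\<Sum>p<N. (\<Sum>q<N. M p q * x q)\<^sup>2) | x. (\<Sum>q<N. (x q)\<^sup>2) \<le> 1}"
  then obtain x where y: "y = sqrt (\<Sum>p<N. (\<Sum>q<N. M p q * x q)\<^sup>2)"
    and x: "(\<Sum>q<N. (x q)\<^sup>2) \<le> 1" by auto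
  have "(\<Sum>q<N. M p q * x q)\<^sup>2 \<le> (\<Sum>q<N. (M p q)\<^sup>2)" for p
  proof -
    have "(\<Sum>q<N. M p q * x q)\<^sup>2 \<le> (\<Sum>q<N. (M p q)\<^sup>2) * (\<Sum>q<N. (x q)\<^sup>2)"
      by (rule Cauchy_Schwarz_ineq_sum)
    also have "\<dots> \<le> (\<Sum>q<N. (M p q)\<^sup>2)"
      using mult_left_mono[OF x, of "\<Sum>q<N. (M p q)\<^sup>2"] by (simp add: sum_nonneg)
    finally show ?thesis .
  qed
  then show "y \<le> frob N M"
    unfolding y frob_def by (intro real_sqrt_le_mono sum_mono)
qed

lemma frob_sq_blocks: "(frob (n*d) M)\<^sup>2 = (\<Sum>i<n. \<Sum>j<n. (frob d (blk d M i j))\<^sup>2)"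
proof -
  have "(frob (n*d) M)\<^sup>2 = (\<Sum>i<n. \<Sum>a<d. \<Sum>j<n. \<Sum>b<d. (blk d M i j a b)\<^sup>2)"
    by (simp add: frob_sq sum_mult_product blk_def add.commute)
  also have "\<dots> = (\<Sum>i<n. \<Sum>j<n. \<Sum>a<d. \<Sum>b<d. (blk d M i j a b)\<^sup>2)"
    by (rule sum.cong[OF refl], rule sum.swap)
  finally show ?thesis by (simp add: frob_sq)
qed

lemma block_index_less:
  assumes "i < n" "a < d" shows "i*d + a < n*(d::nat)"
proof -
  have "i*d + a < Suc i * d" using assms(2) by simp
  also have "\<dots> \<le> n*d" using assms(1) by (intro mult_le_mono1) simp
  finally show ?thesis .
qed

lemma frob_block_scaled_le:
  assumes M: "\<And>p q. p < n*d \<Longrightarrow> q < n*d \<Longrightarrow> M p q = s (p div d) (q div d) * X p q"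
    and X: "\<And>i j. i < n \<Longrightarrow> j < n \<Longrightarrow> frob d (blk d X i j) \<le> b"
  shows "frob (n*d) M \<le> b * sqrt (\<Sum>i<n. \<Sum>j<n. (s i j)\<^sup>2)"
proof (cases "n = 0")
  case False
  have b: "0 \<le> b" using X[of 0 0] False frob_nonneg[of d "blk d X 0 0"] by simp
  have blk_M: "frob d (blk d M i j) = \<bar>s i j\<bar> * frob d (blk d X i j)" if "i < n" "j < n" for i j
  proof -
    have "blk d M i j a b = s i j * blk d X i j a b" if "a < d" "b < d" for a b
      using M[of "i*d + a" "j*d + b"] that \<open>i < n\<close> \<open>j < n\<close>
      by (simp add: blk_def block_index_less)
    then have "frob d (blk d M i j) = sqrt ((s i j)\<^sup>2 * (\<Sum>a<d. \<Sum>b<d. (blk d X i j a b)\<^sup>2))"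
      unfolding frob_def by (simp add: sum_distrib_left power_mult_distrib)
    then show ?thesis
      by (simp add: frob_def real_sqrt_mult)
  qed
  have "(frob (n*d) M)\<^sup>2 = (\<Sum>i<n. \<Sum>j<n. (s i j)\<^sup>2 * (frob d (blk d X i j))\<^sup>2)"
    by (simp add: frob_sq_blocks blk_M power_mult_distrib)
  also have "\<dots> \<le> (\<Sum>i<n. \<Sum>j<n. (s i j)\<^sup>2 * b\<^sup>2)"
    using X frob_nonneg by (intro sum_mono mult_left_mono power_mono) auto
  also have "\<dots> = (b * sqrt (\<Sum>i<n. \<Sum>j<n. (s i j)\<^sup>2))\<^sup>2"
    by (simp add: power_mult_distrib sum_nonneg sum_distrib_left mult.commute)
  finally show ?thesis
    using b by (simp add: power2_le_iff_abs_le sum_nonneg)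
qed (simp add: frob_def)

lemma perturbation_poly_reduced_le:
  fixes t D C e m :: real
  assumes "0 \<le> t" "t \<le> m*e" "0 < D" "D \<le> (m+1)*C" "0 \<le> m" "0 < C" "0 \<le> e"
  shows "t\<^sup>2*C*(C - D) + 2*D*(m*e)*e*(C*(m+1) - D) + (m+1)*e\<^sup>2*D\<^sup>2 \<le> (m+1)^3*e\<^sup>2*C\<^sup>2"
proof (cases "C \<le> D")
  case True
  have "0 \<le> C*(m+1) - D" using assms by (simp add: algebra_simps)
  then have slope: "0 \<le> 2*D*e*e*(C*(m+1) - D)" using assms by simp
  have "t\<^sup>2*C*(C - D) \<le> 0" using True assms by (simp add: mult_nonneg_nonpos)
  moreover have "m*(2*D*e*e*(C*(m+1) - D)) \<le> (m+1)*(2*D*e*e*(C*(m+1) - D))"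
    using slope by (intro mult_right_mono) auto
  moreover have "2*D*(C*(m+1) - D) + D\<^sup>2 \<le> ((m+1)*C)\<^sup>2"
    using zero_le_power2[of "(m+1)*C - D"] by (simp add: power2_eq_square algebra_simps)
  then have "(m+1)*e\<^sup>2*(2*D*(C*(m+1) - D) + D\<^sup>2) \<le> (m+1)*e\<^sup>2*((m+1)*C)\<^sup>2"
    using assms by (intro mult_left_mono) auto
  ultimately show ?thesis
    by (simp add: power2_eq_square power3_eq_cube algebra_simps)
next
  case False
  have "t\<^sup>2*C*(C - D) \<le> (m*e)\<^sup>2*C*(C - D)"
    using False assms by (intro mult_right_mono power_mono) auto
  moreover have "m\<^sup>2*C*(C - D) + 2*D*m*(C*(m+1) - D) + (m+1)*D\<^sup>2
      \<le> m\<^sup>2*C*C + 2*C*m*(C*(m+1)) + (m+1)*C\<^sup>2"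
    using False assms
    by (intro add_mono mult_mono) (auto simp: power2_eq_square algebra_simps intro!: mult_mono)
  moreover have "m\<^sup>2*C*C + 2*C*m*(C*(m+1)) + (m+1)*C\<^sup>2 \<le> (m+1)^3*C\<^sup>2"
    using assms by (simp add: power2_eq_square power3_eq_cube algebra_simps)
  ultimately have "e\<^sup>2*(m\<^sup>2*C*(C - D) + 2*D*m*(C*(m+1) - D) + (m+1)*D\<^sup>2) \<le> e\<^sup>2*((m+1)^3*C\<^sup>2)"
    and "t\<^sup>2*C*(C - D) \<le> (m*e)\<^sup>2*C*(C - D)"
    by (auto intro!: mult_left_mono)
  then show ?thesis
    by (simp add: algebra_simps power2_eq_square)
qed

text \<open>With \<open>t = \<bar>\<Delta>\<bar>\<close> and \<open>m + 1 = n\<close>, the first three summands bound the expanded off-diagonal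
numerators \<open>\<Delta>\<^sup>2\<Sum>w\<^sub>j\<^sup>2\<close>, \<open>-2D\<Delta>\<Sum>w\<^sub>j\<delta>\<^sub>j\<close>, \<open>D\<^sup>2\<Sum>\<delta>\<^sub>j\<^sup>2\<close>, the last one the diagonal numerator.\<close>

lemma perturbation_poly_le:
  fixes t D C e m :: real
  assumes "0 \<le> t" "t \<le> m*e" "0 < D" "D \<le> m*C" "1 \<le> m" "0 < C" "0 \<le> e"
  shows "t\<^sup>2*C*D + 2*D*t*(C*(m*e - t) - e*D) + D\<^sup>2*m*e\<^sup>2 + (C*t + e*D)\<^sup>2 \<le> (m+1)^3*e\<^sup>2*C\<^sup>2"
proof -
  have "t\<^sup>2*C*D + 2*D*t*(C*(m*e - t) - e*D) + D\<^sup>2*m*e\<^sup>2 + (C*t + e*D)\<^sup>2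
      = t\<^sup>2*C*(C - D) + 2*D*t*e*(C*(m+1) - D) + (m+1)*e\<^sup>2*D\<^sup>2"
    by (simp add: algebra_simps power2_eq_square)
  also have "\<dots> \<le> t\<^sup>2*C*(C - D) + 2*D*(m*e)*e*(C*(m+1) - D) + (m+1)*e\<^sup>2*D\<^sup>2"
  proof -
    have "0 \<le> C*(m+1) - D" using assms by (simp add: algebra_simps)
    then have "0 \<le> 2*D*e*(C*(m+1) - D)" using assms by simp
    from mult_left_mono[OF assms(2) this] show ?thesis by (simp add: algebra_simps)
  qed
  also have "\<dots> \<le> (m+1)^3*e\<^sup>2*C\<^sup>2"
    using assms by (intro perturbation_poly_reduced_le) (auto simp: algebra_simps)
  finally show ?thesis .
qed

lemma sum_mult_weighted_sum_ge:
  fixes w \<delta> :: "'a \<Rightarrow> real" and C e :: real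
  assumes "finite A" and w: "\<And>j. j \<in> A \<Longrightarrow> 0 \<le> w j \<and> w j \<le> C"
    and \<delta>: "\<And>j. j \<in> A \<Longrightarrow> \<bar>\<delta> j\<bar> \<le> e"
  shows "\<bar>sum \<delta> A\<bar> * (e * sum w A - C * (card A * e - \<bar>sum \<delta> A\<bar>)) \<le> sum \<delta> A * (\<Sum>j\<in>A. w j * \<delta> j)"
proof (cases "0 \<le> sum \<delta> A")
  case True
  have "(\<Sum>j\<in>A. C * (\<delta> j - e) + e * w j) \<le> (\<Sum>j\<in>A. w j * \<delta> j)"
  proof (rule sum_mono)
    fix j assume "j \<in> A"
    with w[of j] \<delta>[of j] have "0 \<le> (C - w j) * (e - \<delta> j)" by (auto simp: abs_le_iff)
    then show "C * (\<delta> j - e) + e * w j \<le> w j * \<delta> j" by (simp add: algebra_simps)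
  qed
  then have "C * (sum \<delta> A - card A * e) + e * sum w A \<le> (\<Sum>j\<in>A. w j * \<delta> j)"
    by (simp add: sum.distrib sum_distrib_left sum_subtractf algebra_simps)
  from mult_left_mono[OF this True] True show ?thesis by (simp add: algebra_simps)
next
  case False
  have "(\<Sum>j\<in>A. w j * \<delta> j) \<le> (\<Sum>j\<in>A. C * (\<delta> j + e) - e * w j)"
  proof (rule sum_mono)
    fix j assume "j \<in> A"
    with w[of j] \<delta>[of j] have "0 \<le> (C - w j) * (e + \<delta> j)" by (auto simp: abs_le_iff)
    then show "w j * \<delta> j \<le> C * (\<delta> j + e) - e * w j" by (simp add: algebra_simps)
  qed
  then have "(\<Sum>j\<in>A. w j * \<delta> j) \<le> C * (sum \<delta> A + card A * e) - e * sum w A"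
    by (simp add: sum.distrib sum_distrib_left sum_subtractf algebra_simps)
  from mult_left_mono_neg[OF this, of "sum \<delta> A"] False show ?thesis by (simp add: algebra_simps)
qed

lemma perturbation_sum_sq_le:
  fixes w \<delta> :: "'a \<Rightarrow> real" and C e :: real
  assumes "finite A" and w: "\<And>j. j \<in> A \<Longrightarrow> 0 \<le> w j \<and> w j \<le> C"
    and \<delta>: "\<And>j. j \<in> A \<Longrightarrow> \<bar>\<delta> j\<bar> \<le> e"
  defines "D \<equiv> sum w A" and "t \<equiv> \<bar>sum \<delta> A\<bar>" and "m \<equiv> real (card A)"
  shows "(\<Sum>j\<in>A. (w j * sum \<delta> A - \<delta> j * D)\<^sup>2) \<le> t\<^sup>2*C*D + 2*D*t*(C*(m*e - t) - e*D) + D\<^sup>2*m*e\<^sup>2"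
proof -
  define \<Delta> where "\<Delta> = sum \<delta> A"
  have D: "0 \<le> D" using w by (simp add: D_def sum_nonneg)
  have w2: "(\<Sum>j\<in>A. (w j)\<^sup>2) \<le> C * D"
    using sum_mono[of A "\<lambda>j. (w j)\<^sup>2" "\<lambda>j. C * w j"] w
    by (simp add: D_def sum_distrib_left power2_eq_square mult_right_mono)
  have "(\<delta> j)\<^sup>2 \<le> e\<^sup>2" if "j \<in> A" for j
    using \<delta>[OF that] by (simp add: abs_le_square_iff[symmetric])
  then have \<delta>2: "(\<Sum>j\<in>A. (\<delta> j)\<^sup>2) \<le> m * e\<^sup>2"
    using sum_mono[of A "\<lambda>j. (\<delta> j)\<^sup>2" "\<lambda>_. e\<^sup>2"] by (simp add: m_def)
  have cross: "t * (e * D - C * (m * e - t)) \<le> \<Delta> * (\<Sum>j\<in>A. w j * \<delta> j)"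
    using sum_mult_weighted_sum_ge[OF \<open>finite A\<close> w \<delta>] by (simp add: t_def \<Delta>_def D_def m_def)
  have "(\<Sum>j\<in>A. (w j * \<Delta> - \<delta> j * D)\<^sup>2)
      = \<Delta>\<^sup>2 * (\<Sum>j\<in>A. (w j)\<^sup>2) - 2 * D * (\<Delta> * (\<Sum>j\<in>A. w j * \<delta> j)) + D\<^sup>2 * (\<Sum>j\<in>A. (\<delta> j)\<^sup>2)"
    by (simp add: power2_eq_square sum.distrib sum_distrib_left sum_subtractf algebra_simps)
  also have "\<dots> \<le> t\<^sup>2 * (C * D) - 2 * D * (t * (e * D - C * (m * e - t))) + D\<^sup>2 * (m * e\<^sup>2)"
  proof (intro add_mono diff_mono)
    show "\<Delta>\<^sup>2 * (\<Sum>j\<in>A. (w j)\<^sup>2) \<le> t\<^sup>2 * (C * D)"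
      using mult_left_mono[OF w2, of "\<Delta>\<^sup>2"] by (simp add: t_def \<Delta>_def)
    show "2 * D * (t * (e * D - C * (m * e - t))) \<le> 2 * D * (\<Delta> * (\<Sum>j\<in>A. w j * \<delta> j))"
      using cross D by (simp add: mult_left_mono)
    show "D\<^sup>2 * (\<Sum>j\<in>A. (\<delta> j)\<^sup>2) \<le> D\<^sup>2 * (m * e\<^sup>2)"
      using \<delta>2 by (simp add: mult_left_mono)
  qed
  finally show ?thesis by (simp add: \<Delta>_def algebra_simps)
qed

lemma row_perturbation_sum_sq_le:
  fixes w \<delta> :: "nat \<Rightarrow> real" and C e :: real
  assumes i: "i < n" and w: "\<forall>j<n. 0 \<le> w j \<and> w j \<le> C" and \<delta>: "\<forall>j<n. \<bar>\<delta> j\<bar> \<le> e"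
    and pos: "0 < sum w ({..<n} - {i})"
  shows "(\<Sum>j<n. (w j * sum \<delta> ({..<n} - {i}) - \<delta> j * sum w ({..<n} - {i}))\<^sup>2) \<le> real n ^ 3 * e\<^sup>2 * C\<^sup>2"
proof -
  define A where "A = {..<n} - {i}"
  define D t m where "D = sum w A" and "t = \<bar>sum \<delta> A\<bar>" and "m = real (card A)"
  have e: "0 \<le> e" using \<delta> i by (meson abs_ge_zero order_trans)
  have A: "finite A" "m + 1 = real n" using i by (auto simp: A_def m_def)
  have "A \<noteq> {}" using pos unfolding A_def[symmetric] by auto
  then have m: "1 \<le> m" using A by (simp add: m_def Suc_le_eq card_gt_0_iff)
  have "t \<le> (\<Sum>j\<in>A. \<bar>\<delta> j\<bar>)" unfolding t_def by (rule sum_abs)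
  also have "\<dots> \<le> (\<Sum>j\<in>A. e)" using \<delta> by (intro sum_mono) (auto simp: A_def)
  finally have t: "t \<le> m * e" by (simp add: m_def)
  have DC: "D \<le> m * C"
    using sum_mono[of A w "\<lambda>_. C"] w by (auto simp: D_def m_def A_def)
  have C: "0 < C" using DC pos m by (simp add: D_def A_def) (smt (verit) mult_nonneg_nonpos)
  have "\<bar>w i * sum \<delta> A - \<delta> i * D\<bar> \<le> \<bar>w i\<bar> * t + \<bar>\<delta> i\<bar> * D"
    using pos abs_triangle_ineq4[of "w i * sum \<delta> A" "\<delta> i * D"] by (simp add: abs_mult t_def D_def A_def)
  also have "\<dots> \<le> C * t + e * D"
    using w \<delta> i pos by (intro add_mono mult_right_mono) (auto simp: t_def D_def A_def)
  finally have diag: "(w i * sum \<delta> A - \<delta> i * D)\<^sup>2 \<le> (C * t + e * D)\<^sup>2"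
    by (simp add: abs_le_square_iff[symmetric])
  have "(\<Sum>j<n. (w j * sum \<delta> A - \<delta> j * D)\<^sup>2)
      = (w i * sum \<delta> A - \<delta> i * D)\<^sup>2 + (\<Sum>j\<in>A. (w j * sum \<delta> A - \<delta> j * D)\<^sup>2)"
    using i by (simp add: A_def sum.remove)
  also have "\<dots> \<le> (C * t + e * D)\<^sup>2 + (t\<^sup>2*C*D + 2*D*t*(C*(m*e - t) - e*D) + D\<^sup>2*m*e\<^sup>2)"
    using diag perturbation_sum_sq_le[OF A(1), of w C \<delta> e] w \<delta>
    by (intro add_mono) (auto simp: A_def D_def t_def m_def)
  also have "\<dots> \<le> (m+1)^3*e\<^sup>2*C\<^sup>2"
    using perturbation_poly_le[OF _ t _ DC m C e] pos by (simp add: t_def D_def A_def)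
  finally show ?thesis by (simp add: A A_def D_def)
qed

lemma normalized_row_diff_sq_le:
  fixes W U :: "nat \<Rightarrow> nat \<Rightarrow> real" and C e :: real
  assumes i: "i < n" and W: "\<forall>j<n. 0 \<le> W i j \<and> W i j \<le> C"
    and U: "\<forall>j<n. \<bar>U i j - W i j\<bar> \<le> e" and deg_W: "real n * e < deg n W i"
  shows "(\<Sum>j<n. (W i j / deg n W i - U i j / deg n U i)\<^sup>2)
           \<le> real n ^ 3 * e\<^sup>2 * C\<^sup>2 / ((deg n W i)\<^sup>2 * (deg n W i - real n * e)\<^sup>2)"
proof -
  define A where "A = {..<n} - {i}"
  define \<delta> where "\<delta> j = U i j - W i j" for j
  define D \<Delta> where "D = deg n W i" and "\<Delta> = sum \<delta> A"
  have e: "0 \<le> e" using U i by (meson abs_ge_zero order_trans)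
  have D: "0 < D" using deg_W e by (simp add: D_def) (smt (verit) mult_nonneg_nonneg of_nat_0_le_iff)
  have deg_U: "deg n U i = D + \<Delta>"
    by (simp add: deg_def D_def \<Delta>_def \<delta>_def A_def sum_subtractf)
  have "\<bar>\<Delta>\<bar> \<le> (\<Sum>j\<in>A. \<bar>\<delta> j\<bar>)" unfolding \<Delta>_def by (rule sum_abs)
  also have "\<dots> \<le> (\<Sum>j\<in>A. e)" using U by (intro sum_mono) (auto simp: A_def \<delta>_def)
  also have "\<dots> \<le> real n * e" using i e by (simp add: A_def mult_right_mono)
  finally have E: "D - real n * e \<le> D + \<Delta>" by linarith
  have E_pos: "0 < D + \<Delta>" using E deg_W by (simp add: D_def)
  have "W i j / D - U i j / (D + \<Delta>) = (W i j * \<Delta> - \<delta> j * D) / (D * (D + \<Delta>))" for j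
    using D E_pos by (simp add: \<delta>_def field_simps)
  then have "(\<Sum>j<n. (W i j / D - U i j / (D + \<Delta>))\<^sup>2)
      = (\<Sum>j<n. (W i j * \<Delta> - \<delta> j * D)\<^sup>2) / (D\<^sup>2 * (D + \<Delta>)\<^sup>2)"
    by (simp add: power_divide power_mult_distrib sum_divide_distrib)
  also have "\<dots> \<le> real n ^ 3 * e\<^sup>2 * C\<^sup>2 / (D\<^sup>2 * (D + \<Delta>)\<^sup>2)"
    using row_perturbation_sum_sq_le[OF i, of "W i" C \<delta> e] W U D
    by (intro divide_right_mono) (auto simp: \<delta>_def D_def \<Delta>_def A_def deg_def)
  also have "\<dots> \<le> real n ^ 3 * e\<^sup>2 * C\<^sup>2 / (D\<^sup>2 * (D - real n * e)\<^sup>2)"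
    using D E deg_W by (intro divide_left_mono mult_left_mono power_mono mult_pos_pos) (auto simp: D_def)
  finally show ?thesis by (simp add: D_def deg_U)
qed

lemma normalized_sum_sq_le:
  fixes W :: "nat \<Rightarrow> nat \<Rightarrow> real" and C \<gamma> :: real
  assumes W: "\<forall>i<n. \<forall>j<n. 0 \<le> W i j \<and> W i j \<le> C" and C: "0 \<le> C"
    and deg_W: "\<forall>i<n. real n * \<gamma> < deg n W i" and "0 < \<gamma>"
  shows "sqrt (\<Sum>i<n. \<Sum>j<n. (W i j / deg n W i)\<^sup>2) \<le> C / \<gamma>"
proof (cases "n = 0")
  case False
  have "(W i j / deg n W i)\<^sup>2 \<le> (C / (real n * \<gamma>))\<^sup>2" if "i < n" "j < n" for i j
  proof -
    have "0 < real n * \<gamma>" using False \<open>0 < \<gamma>\<close> by simp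
    then have "W i j / deg n W i \<le> C / (real n * \<gamma>)" "0 \<le> W i j / deg n W i"
      using W deg_W that C by (auto intro!: frac_le)
    then show ?thesis by (intro power_mono)
  qed
  then have "(\<Sum>i<n. \<Sum>j<n. (W i j / deg n W i)\<^sup>2) \<le> (\<Sum>i<n. \<Sum>j<n. (C / (real n * \<gamma>))\<^sup>2)"
    by (intro sum_mono) auto
  also have "\<dots> = (C / \<gamma>)\<^sup>2"
    using False by (simp add: power2_eq_square field_simps)
  finally show ?thesis
    using C \<open>0 < \<gamma>\<close> by (intro real_le_lsqrt) auto
qed (use \<open>0 < \<gamma>\<close> C in auto)

lemma normalized_row_diff_sq_le_uniform:
  fixes W U :: "nat \<Rightarrow> nat \<Rightarrow> real" and C \<epsilon> \<gamma> :: real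
  assumes i: "i < n" and W: "\<forall>j<n. 0 \<le> W i j \<and> W i j \<le> C"
    and U: "\<forall>j<n. \<bar>U i j - W i j\<bar> \<le> \<epsilon>"
    and deg_W: "real n * \<gamma> < deg n W i" and "0 \<le> \<epsilon>" "\<epsilon> < \<gamma>"
  shows "(\<Sum>j<n. (W i j / deg n W i - U i j / deg n U i)\<^sup>2) \<le> (\<epsilon> * C / (\<gamma> * (\<gamma> - \<epsilon>)))\<^sup>2 / real n"
proof -
  define D where "D = deg n W i"
  have gap: "real n * (\<gamma> - \<epsilon>) < D - real n * \<epsilon>"
    using deg_W by (simp add: D_def algebra_simps)
  have pos: "0 < real n * \<gamma>" "0 < real n * (\<gamma> - \<epsilon>)" "0 < n"
    using i \<open>0 \<le> \<epsilon>\<close> \<open>\<epsilon> < \<gamma>\<close> by auto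
  have "(\<Sum>j<n. (W i j / D - U i j / deg n U i)\<^sup>2) \<le> real n ^ 3 * \<epsilon>\<^sup>2 * C\<^sup>2 / (D\<^sup>2 * (D - real n * \<epsilon>)\<^sup>2)"
    using normalized_row_diff_sq_le[where W = W and U = U, OF i W U] gap pos by (simp add: D_def)
  also have "\<dots> \<le> real n ^ 3 * \<epsilon>\<^sup>2 * C\<^sup>2 / ((real n * \<gamma>)\<^sup>2 * (real n * (\<gamma> - \<epsilon>))\<^sup>2)"
    using deg_W gap pos by (intro divide_left_mono mult_mono power_mono mult_pos_pos) (auto simp: D_def)
  also have "\<dots> = real n ^ 3 * (\<epsilon> * C)\<^sup>2 / (real n ^ 3 * (real n * (\<gamma> * (\<gamma> - \<epsilon>))\<^sup>2))"
  proof -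
    have "(real n * \<gamma>)\<^sup>2 * (real n * (\<gamma> - \<epsilon>))\<^sup>2 = real n ^ 3 * (real n * (\<gamma> * (\<gamma> - \<epsilon>))\<^sup>2)"
      by (simp add: power2_eq_square power3_eq_cube mult_ac)
    then show ?thesis by (simp only: power_mult_distrib mult.assoc)
  qed
  also have "\<dots> = (\<epsilon> * C / (\<gamma> * (\<gamma> - \<epsilon>)))\<^sup>2 / real n"
    using pos by (simp add: power_divide mult.commute)
  finally show ?thesis by (simp add: D_def)
qed

lemma normalized_diff_sum_sq_le:
  fixes W U :: "nat \<Rightarrow> nat \<Rightarrow> real" and C \<epsilon> \<gamma> :: real
  assumes W: "\<forall>i<n. \<forall>j<n. 0 \<le> W i j \<and> W i j \<le> C" and C: "0 \<le> C"
    and U: "\<forall>i<n. \<forall>j<n. \<bar>U i j - W i j\<bar> \<le> \<epsilon>"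
    and deg_W: "\<forall>i<n. real n * \<gamma> < deg n W i" and "0 \<le> \<epsilon>" "\<epsilon> < \<gamma>"
  shows "sqrt (\<Sum>i<n. \<Sum>j<n. (W i j / deg n W i - U i j / deg n U i)\<^sup>2) \<le> \<epsilon> * C / (\<gamma> * (\<gamma> - \<epsilon>))"
proof (cases "n = 0")
  case False
  have "(\<Sum>i<n. \<Sum>j<n. (W i j / deg n W i - U i j / deg n U i)\<^sup>2)
      \<le> (\<Sum>i<n. (\<epsilon> * C / (\<gamma> * (\<gamma> - \<epsilon>)))\<^sup>2 / real n)"
    using W U deg_W \<open>0 \<le> \<epsilon>\<close> \<open>\<epsilon> < \<gamma>\<close> by (intro sum_mono normalized_row_diff_sq_le_uniform) auto
  also have "\<dots> = (\<epsilon> * C / (\<gamma> * (\<gamma> - \<epsilon>)))\<^sup>2"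
    using False by simp
  finally show ?thesis
    using C \<open>0 \<le> \<epsilon>\<close> \<open>\<epsilon> < \<gamma>\<close> by (intro real_le_lsqrt) auto
qed (use \<open>0 \<le> \<epsilon>\<close> \<open>\<epsilon> < \<gamma>\<close> C in auto)

lemma opnorm_cong:
  assumes "\<And>p q. p < N \<Longrightarrow> q < N \<Longrightarrow> M p q = M' p q"
  shows "opnorm N M = opnorm N M'"
proof -
  have "(\<Sum>p<N. (\<Sum>q<N. M p q * x q)\<^sup>2) = (\<Sum>p<N. (\<Sum>q<N. M' p q * x q)\<^sup>2)" for x
    using assms by (intro sum.cong refl arg_cong[where f = "\<lambda>t. t\<^sup>2"]) auto
  then show ?thesis unfolding opnorm_def by simp
qed

lemma Lmat_eq: "Lmat n d W G p q = W (p div d) (q div d) / deg n W (p div d) * G p q"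
  by (simp add: Lmat_def divide_inverse mult_ac)

lemma Lmat_scale_rows:
  assumes "f (p div d) \<noteq> 0"
  shows "Lmat n d (\<lambda>i j. W i j / f i) G p q = Lmat n d W G p q"
  using assms by (simp add: Lmat_eq deg_def sum_divide_distrib[symmetric])

lemma opnorm_Lmat_diff_le:
  fixes W U G Gt :: "nat \<Rightarrow> nat \<Rightarrow> real" and C \<epsilon> \<eta> \<gamma> :: real
  assumes W: "\<forall>i<n. \<forall>j<n. 0 \<le> W i j \<and> W i j \<le> C" and C: "0 \<le> C"
    and U: "\<forall>i<n. \<forall>j<n. \<bar>U i j - W i j\<bar> \<le> \<epsilon>"
    and G: "\<forall>i<n. \<forall>j<n. frob d (\<lambda>a b. blk d Gt i j a b - blk d G i j a b) \<le> \<eta>" and "0 \<le> \<eta>"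
    and Gt: "\<forall>i<n. \<forall>j<n. frob d (blk d Gt i j) \<le> C"
    and deg_W: "\<forall>i<n. real n * \<gamma> < deg n W i" and "0 \<le> \<epsilon>" "\<epsilon> < \<gamma>"
  shows "opnorm (n*d) (\<lambda>p q. Lmat n d W G p q - Lmat n d U Gt p q)
           \<le> \<eta> * (C / \<gamma>) + C * (\<epsilon> * C / (\<gamma> * (\<gamma> - \<epsilon>)))"
proof -
  define F where "F p q = - (W (p div d) (q div d) / deg n W (p div d)) * (Gt p q - G p q)" for p q
  define H where "H p q = (W (p div d) (q div d) / deg n W (p div d)
                          - U (p div d) (q div d) / deg n U (p div d)) * Gt p q" for p q
  have "a * x - b * y = - a * (y - x) + (a - b) * y" for a b x y :: real
    by (simp add: algebra_simps)
  then have "(\<lambda>p q. Lmat n d W G p q - Lmat n d U Gt p q) = (\<lambda>p q. F p q + H p q)"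
    unfolding Lmat_eq F_def H_def by blast
  then have "opnorm (n*d) (\<lambda>p q. Lmat n d W G p q - Lmat n d U Gt p q) \<le> frob (n*d) F + frob (n*d) H"
    using opnorm_le_frob frob_add_le order_trans by metis
  moreover have "frob (n*d) F \<le> \<eta> * (C / \<gamma>)"
  proof -
    have "frob (n*d) F \<le> \<eta> * sqrt (\<Sum>i<n. \<Sum>j<n. (- (W i j / deg n W i))\<^sup>2)"
      using G
      by (intro frob_block_scaled_le[where X = "\<lambda>p q. Gt p q - G p q"])
         (simp_all add: F_def blk_def[abs_def])
    also have "\<dots> \<le> \<eta> * (C / \<gamma>)"
      using normalized_sum_sq_le[OF W C deg_W] \<open>0 \<le> \<eta>\<close> \<open>0 \<le> \<epsilon>\<close> \<open>\<epsilon> < \<gamma>\<close>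
      by (intro mult_left_mono) auto
    finally show ?thesis .
  qed
  moreover have "frob (n*d) H \<le> C * (\<epsilon> * C / (\<gamma> * (\<gamma> - \<epsilon>)))"
  proof -
    have "frob (n*d) H \<le> C * sqrt (\<Sum>i<n. \<Sum>j<n. (W i j / deg n W i - U i j / deg n U i)\<^sup>2)"
      using Gt by (intro frob_block_scaled_le[where X = Gt]) (simp_all add: H_def)
    also have "\<dots> \<le> C * (\<epsilon> * C / (\<gamma> * (\<gamma> - \<epsilon>)))"
      using normalized_diff_sum_sq_le[OF W C U deg_W \<open>0 \<le> \<epsilon>\<close> \<open>\<epsilon> < \<gamma>\<close>] C
      by (intro mult_left_mono) auto
    finally show ?thesis .
  qed
  ultimately show ?thesis by linarith
qed

theorem lemma2p2:
  fixes n d :: nat and W Wt G Gt :: "nat \<Rightarrow> nat \<Rightarrow> real" and f :: "nat \<Rightarrow> real"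
    and \<epsilon> \<eta> C \<gamma> :: real
  assumes "n \<ge> 1" and "d \<ge> 1"
    and f_pos: "\<forall>i<n. f i > 0"
    and "\<epsilon> \<ge> 0" and "\<eta> \<ge> 0"
    and W_close: "\<forall>i<n. \<forall>j<n. \<bar>Wt i j / f i - W i j\<bar> \<le> \<epsilon>"
    and G_close: "\<forall>i<n. \<forall>j<n. frob d (\<lambda>a b. blk d Gt i j a b - blk d G i j a b) \<le> \<eta>"
    and "C > 0"
    and W_bd: "\<forall>i<n. \<forall>j<n. 0 \<le> W i j \<and> W i j \<le> C"
    and G_bd: "\<forall>i<n. \<forall>j<n. frob d (blk d G i j) \<le> C"
    and Gt_bd: "\<forall>i<n. \<forall>j<n. frob d (blk d Gt i j) \<le> C"
    and deg_gt: "\<forall>i<n. (1 / real n) * deg n W i > \<gamma>"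
    and "\<gamma> > \<epsilon>"
  shows "opnorm (n*d) (\<lambda>p q. Lmat n d W G p q - Lmat n d Wt Gt p q)
           \<le> (1/\<gamma>) * C * (\<eta> + \<epsilon>) + \<epsilon> / (\<gamma> * (\<gamma> - \<epsilon>)) * C\<^sup>2"
proof -
  define U where "U = (\<lambda>i j. Wt i j / f i)"
  have deg_W: "\<forall>i<n. real n * \<gamma> < deg n W i"
    using deg_gt \<open>n \<ge> 1\<close> by (simp add: pos_less_divide_eq mult.commute)
  have U_close: "\<forall>i<n. \<forall>j<n. \<bar>U i j - W i j\<bar> \<le> \<epsilon>"
    using W_close by (simp add: U_def)
  have "Lmat n d Wt Gt p q = Lmat n d U Gt p q" if "p < n*d" for p q
  proof -
    have "p div d < n" using that \<open>d \<ge> 1\<close> by (simp add: div_less_iff_less_mult)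
    then have "f (p div d) \<noteq> 0" using f_pos by (simp add: less_imp_neq[symmetric])
    then show ?thesis unfolding U_def by (rule Lmat_scale_rows[symmetric])
  qed
  then have "opnorm (n*d) (\<lambda>p q. Lmat n d W G p q - Lmat n d Wt Gt p q)
      = opnorm (n*d) (\<lambda>p q. Lmat n d W G p q - Lmat n d U Gt p q)"
    by (intro opnorm_cong) simp
  also have "\<dots> \<le> \<eta> * (C / \<gamma>) + C * (\<epsilon> * C / (\<gamma> * (\<gamma> - \<epsilon>)))"
    using \<open>C > 0\<close> by (intro opnorm_Lmat_diff_le W_bd U_close G_close Gt_bd deg_W) (use assms in auto)
  also have "\<dots> \<le> (1/\<gamma>) * C * (\<eta> + \<epsilon>) + \<epsilon> / (\<gamma> * (\<gamma> - \<epsilon>)) * C\<^sup>2"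
    using \<open>C > 0\<close> \<open>\<epsilon> \<ge> 0\<close> \<open>\<gamma> > \<epsilon>\<close>
    by (simp add: algebra_simps power2_eq_square add_divide_distrib)
  finally show ?thesis .
qed

end
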